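(* Let $(\mathcal K,[\cdot,\cdot])$ be a Krein space and let $T$ be a closed, densely defined linear operator in $\mathcal K$ such that $\rho(T^{[*]}T)\neq\emptyset$ and $\rho(TT^{[*]})\neq\emptyset$ (so both $T^{[*]}T$ and $TT^{[*]}$ are selfadjoint). Then, with $\mathbb R^+=(0,\infty)$ and $\mathbb R^-=(-\infty,0)$: (i) $\sigma_{ap}(T^{[*]}T)\setminus\{0\}=\sigma_{ap}(TT^{[*]})\setminus\{0\}$; (ii) $\sigma_{++}(T^{[*]}T)\cap\mathbb R^+=\sigma_{++}(TT^{[*]})\cap\mathbb R^+$ and $\sigma_{--}(T^{[*]}T)\cap\mathbb R^+=\sigma_{--}(TT^{[*]})\cap\mathbb R^+$; (iii) $\sigma_{++}(T^{[*]}T)\cap\mathbb R^-=\sigma_{--}(TT^{[*]})\cap\mathbb R^-$ and $\sigma_{--}(T^{[*]}T)\cap\mathbb R^-=\sigma_{++}(TT^{[*]})\cap\mathbb R^-$; (iv) $\sigma_{\pi_+}(T^{[*]}T)\cap\mathbb R^+=\sigma_{\pi_+}(TT^{[*]})\cap\mathbb R^+$ and $\sigma_{\pi_-}(T^{[*]}T)\cap\mathbb R^+=\sigma_{\pi_-}(TT^{[*]})\cap\mathbb R^+$; (v) $\sigma_{\pi_+}(T^{[*]}T)\cap\mathbb R^-=\sigma_{\pi_-}(TT^{[*]})\cap\mathbb R^-$ and $\sigma_{\pi_-}(T^{[*]}T)\cap\mathbb R^-=\sigma_{\pi_+}(TT^{[*]})\cap\mathbb R^-$.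
   Context: $\mathcal K$ carries a Banach norm $\|\cdot\|$ for which $[\cdot,\cdot]$ is continuous; $T^{[*]}$ is the Krein space adjoint of $T$; products have natural domains. For a closed operator $S$, $\sigma_{ap}(S)$ is the set of $\lambda$ for which there is $(x_n)\subset\operatorname{dom}S$ with $\|x_n\|=1$ and $(S-\lambda)x_n\to0$. For a selfadjoint operator $S$ in $\mathcal K$ (i.e. $S=S^{[*]}$): a point $\lambda\in\sigma(S)$ belongs to $\sigma_{++}(S)$ (resp. $\sigma_{--}(S)$), a spectral point of positive (resp. negative) type, if $\lambda\in\sigma_{ap}(S)$ and for every sequence $(x_n)\subset\operatorname{dom}S$ with $\|x_n\|=1$ and $(S-\lambda)x_n\to0$ one has $\liminf_n[x_n,x_n]>0$ (resp. $\limsup_n[x_n,x_n]<0$). A point $\lambda\in\sigma(S)$ belongs to $\sigma_{\pi_+}(S)$ (resp. $\sigma_{\pi_-}(S)$), a spectral point of type $\pi_+$ (resp. $\pi_-$), if $\lambda\in\sigma_{ap}(S)$ and for every sequence $(x_n)\subset\operatorname{dom}S$ with $\|x_n\|=1$, $x_n\rightharpoonup0$ weakly and $(S-\lambda)x_n\to0$ one has $\liminf_n[x_n,x_n]>0$ (resp. $\limsup_n[x_n,x_n]<0$). *)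

theory Defs
  imports "HOL-Analysis.Analysis"
begin

class complex_vector = real_vector +
  fixes scaleC :: "complex \<Rightarrow> 'a \<Rightarrow> 'a"  (infixr \<open>*\<^sub>C\<close> 75)
  assumes scaleC_add_right: "a *\<^sub>C (x + y) = a *\<^sub>C x + a *\<^sub>C y"
    and scaleC_add_left: "(a + b) *\<^sub>C x = a *\<^sub>C x + b *\<^sub>C x"
    and scaleC_scaleC: "a *\<^sub>C (b *\<^sub>C x) = (a * b) *\<^sub>C x"
    and scaleC_one: "1 *\<^sub>C x = x"
    and scaleR_scaleC: "r *\<^sub>R x = (complex_of_real r) *\<^sub>C x"

class complex_normed_vector = complex_vector + real_normed_vector +
  assumes norm_scaleC: "norm (a *\<^sub>C x) = cmod a * norm x"

definition sesquilinear :: "('a::complex_vector \<Rightarrow> 'a \<Rightarrow> complex) \<Rightarrow> bool" where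
  "sesquilinear ip \<longleftrightarrow>
     (\<forall>x y z. ip (x + y) z = ip x z + ip y z) \<and>
     (\<forall>a x y. ip (a *\<^sub>C x) y = a * ip x y) \<and>
     (\<forall>x y. ip y x = cnj (ip x y))"

text \<open>(K,[.,.]) is a Krein space whose topology is given by the Banach norm of K:
  there is a fundamental symmetry J (linear, J J = I, J [.,.]-symmetric) such that
  the J-inner product [J x, y] is a Hilbert space inner product whose norm is
  equivalent to the given norm (completeness comes from the class banach).
  Then K = ker(J-I) [+] ker(J+I) is a fundamental decomposition.\<close>
definition krein_space :: "('a::complex_normed_vector \<Rightarrow> 'a \<Rightarrow> complex) \<Rightarrow> bool" where
  "krein_space ip \<longleftrightarrow> sesquilinear ip \<and>
     (\<exists>J::'a \<Rightarrow> 'a.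
        (\<forall>x y. J (x + y) = J x + J y) \<and> (\<forall>a x. J (a *\<^sub>C x) = a *\<^sub>C J x) \<and>
        (\<forall>x. J (J x) = x) \<and> (\<forall>x y. ip (J x) y = ip x (J y)) \<and>
        (\<exists>c C. 0 < c \<and> (\<forall>x. c * (norm x)\<^sup>2 \<le> Re (ip (J x) x) \<and>
                              Re (ip (J x) x) \<le> C * (norm x)\<^sup>2)))"

section \<open>(Unbounded) linear operators, represented by their graphs\<close>

definition linear_operator :: "('a::complex_vector \<times> 'a) set \<Rightarrow> bool" where
  "linear_operator T \<longleftrightarrow>
     (0, 0) \<in> T \<and>
     (\<forall>x y u v. (x, y) \<in> T \<longrightarrow> (u, v) \<in> T \<longrightarrow> (x + u, y + v) \<in> T) \<and>
     (\<forall>a x y. (x, y) \<in> T \<longrightarrow> (a *\<^sub>C x, a *\<^sub>C y) \<in> T) \<and>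
     (\<forall>y. (0, y) \<in> T \<longrightarrow> y = 0)"

text \<open>dom T is \<open>Domain T\<close>; T is closed iff its graph is closed in K x K;
  densely defined iff \<open>closure (Domain T) = UNIV\<close>.\<close>

definition krein_adjoint ::
  "('a \<Rightarrow> 'a \<Rightarrow> complex) \<Rightarrow> ('a \<times> 'a) set \<Rightarrow> ('a \<times> 'a) set" where
  "krein_adjoint ip T = {(y, z). \<forall>(x, w) \<in> T. ip w y = ip x z}"

text \<open>Products with natural domains: \<open>S \<cdot> T\<close> (first T, then S) is the relational
  composition \<open>T O S\<close>.  Thus T^[*] T = \<open>T O krein_adjoint ip T\<close> and
  T T^[*] = \<open>krein_adjoint ip T O T\<close>.\<close>

definition resolvent_set :: "('a::complex_normed_vector \<times> 'a) set \<Rightarrow> complex set" where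
  "resolvent_set S = {l. (\<forall>w. \<exists>x y. (x, y) \<in> S \<and> y - l *\<^sub>C x = w) \<and>
                         (\<exists>C. \<forall>(x, y) \<in> S. norm x \<le> C * norm (y - l *\<^sub>C x))}"

definition spectrum_op :: "('a::complex_normed_vector \<times> 'a) set \<Rightarrow> complex set" where
  "spectrum_op S = - resolvent_set S"

definition approx_point_spectrum :: "('a::complex_normed_vector \<times> 'a) set \<Rightarrow> complex set" where
  "approx_point_spectrum S = {l. \<exists>x y. (\<forall>n. (x n, y n) \<in> S \<and> norm (x n) = 1) \<and>
                                    (\<lambda>n. y n - l *\<^sub>C x n) \<longlonglongrightarrow> 0}"

text \<open>Weak convergence to 0 (real continuous functionals suffice: they are the real
  parts of the complex ones).\<close>
definition weakly_to_zero :: "(nat \<Rightarrow> 'a::real_normed_vector) \<Rightarrow> bool" where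
  "weakly_to_zero x \<longleftrightarrow> (\<forall>f::'a \<Rightarrow> real. bounded_linear f \<longrightarrow> (\<lambda>n. f (x n)) \<longlonglongrightarrow> 0)"

definition spec_pos_type ::
  "('a::complex_normed_vector \<Rightarrow> 'a \<Rightarrow> complex) \<Rightarrow> ('a \<times> 'a) set \<Rightarrow> complex set" where
  "spec_pos_type ip S = {l \<in> spectrum_op S. l \<in> approx_point_spectrum S \<and>
     (\<forall>x y. (\<forall>n. (x n, y n) \<in> S \<and> norm (x n) = 1) \<longrightarrow> (\<lambda>n. y n - l *\<^sub>C x n) \<longlonglongrightarrow> 0 \<longrightarrow>
        liminf (\<lambda>n. ereal (Re (ip (x n) (x n)))) > 0)}"

definition spec_neg_type ::
  "('a::complex_normed_vector \<Rightarrow> 'a \<Rightarrow> complex) \<Rightarrow> ('a \<times> 'a) set \<Rightarrow> complex set" where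
  "spec_neg_type ip S = {l \<in> spectrum_op S. l \<in> approx_point_spectrum S \<and>
     (\<forall>x y. (\<forall>n. (x n, y n) \<in> S \<and> norm (x n) = 1) \<longrightarrow> (\<lambda>n. y n - l *\<^sub>C x n) \<longlonglongrightarrow> 0 \<longrightarrow>
        limsup (\<lambda>n. ereal (Re (ip (x n) (x n)))) < 0)}"

definition spec_pi_plus ::
  "('a::complex_normed_vector \<Rightarrow> 'a \<Rightarrow> complex) \<Rightarrow> ('a \<times> 'a) set \<Rightarrow> complex set" where
  "spec_pi_plus ip S = {l \<in> spectrum_op S. l \<in> approx_point_spectrum S \<and>
     (\<forall>x y. (\<forall>n. (x n, y n) \<in> S \<and> norm (x n) = 1) \<longrightarrow> weakly_to_zero x \<longrightarrow>
        (\<lambda>n. y n - l *\<^sub>C x n) \<longlonglongrightarrow> 0 \<longrightarrow>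
        liminf (\<lambda>n. ereal (Re (ip (x n) (x n)))) > 0)}"

definition spec_pi_minus ::
  "('a::complex_normed_vector \<Rightarrow> 'a \<Rightarrow> complex) \<Rightarrow> ('a \<times> 'a) set \<Rightarrow> complex set" where
  "spec_pi_minus ip S = {l \<in> spectrum_op S. l \<in> approx_point_spectrum S \<and>
     (\<forall>x y. (\<forall>n. (x n, y n) \<in> S \<and> norm (x n) = 1) \<longrightarrow> weakly_to_zero x \<longrightarrow>
        (\<lambda>n. y n - l *\<^sub>C x n) \<longlonglongrightarrow> 0 \<longrightarrow>
        limsup (\<lambda>n. ereal (Re (ip (x n) (x n)))) < 0)}"

definition pos_reals :: "complex set" where
  "pos_reals = complex_of_real ` {0<..}"

definition neg_reals :: "complex set" where
  "neg_reals = complex_of_real ` {..<0}"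

end

theory Submission
  imports Defs
begin

text \<open>
  The proof is carried out for an abstract adjoint pair P, Q (\<open>[P x, y] = [x, Q y]\<close>), which
  is symmetric.  A normalized approximate eigensequence x of \<open>Q P\<close> at l is smoothed by the
  resolvent of \<open>Q P\<close> (whose product with P is bounded by the closed graph theorem) so that
  \<open>y \<approx> P x\<close> is an approximate eigensequence of \<open>P Q\<close>; the resolvent of \<open>P Q\<close> keeps y away
  from 0, and after normalization \<open>s\<^sup>2 [y, y] \<approx> l [x, x]\<close> with s bounded below, so eventual
  definiteness of \<open>[y, y]\<close> transfers to \<open>[x, x]\<close> with the sign of l.
\<close>

lemma scaleC_zero_right [simp]: "a *\<^sub>C (0::'a::complex_vector) = 0"
  by (metis add_cancel_right_left scaleC_add_right)

lemma scaleC_minus_right: "a *\<^sub>C (- x::'a::complex_vector) = - (a *\<^sub>C x)"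
  by (metis add.inverse_unique add.right_inverse scaleC_add_right scaleC_zero_right)

lemma scaleC_diff_right: "a *\<^sub>C (x - y::'a::complex_vector) = a *\<^sub>C x - a *\<^sub>C y"
  by (metis diff_conv_add_uminus scaleC_add_right scaleC_minus_right)

lemma scaleC_diff_left: "(a - b) *\<^sub>C (x::'a::complex_vector) = a *\<^sub>C x - b *\<^sub>C x"
  by (metis add_diff_cancel_right' eq_diff_eq scaleC_add_left)

lemma scaleC_scaleR_commute: "a *\<^sub>C (r *\<^sub>R (v::'a::complex_vector)) = r *\<^sub>R (a *\<^sub>C v)"
  by (simp add: scaleR_scaleC scaleC_scaleC mult.commute)

lemma bounded_linear_scaleC: "bounded_linear (\<lambda>v::'a::complex_normed_vector. a *\<^sub>C v)"
  by (rule bounded_linear_intro[where K = "cmod a"])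
     (simp_all add: scaleC_add_right scaleC_scaleR_commute norm_scaleC mult.commute)

context
  fixes s :: "'a::complex_vector \<Rightarrow> 'a \<Rightarrow> complex"
  assumes sq: "sesquilinear s"
begin

lemma sq_add_left: "s (x + y) z = s x z + s y z"
  using sq unfolding sesquilinear_def by blast

lemma sq_scale_left: "s (a *\<^sub>C x) y = a * s x y"
  using sq unfolding sesquilinear_def by blast

lemma sq_conj: "s y x = cnj (s x y)"
  using sq unfolding sesquilinear_def by blast

lemma sq_add_right: "s z (x + y) = s z x + s z y"
  by (metis complex_cnj_add sq_add_left sq_conj)

lemma sq_scale_right: "s x (a *\<^sub>C y) = cnj a * s x y"
  by (metis complex_cnj_mult sq_conj sq_scale_left)

lemma sq_diff_left: "s (x - y) z = s x z - s y z"
  using sq_add_left[of "x - y" y z] by (simp add: algebra_simps)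

lemma sq_diff_right: "s z (x - y) = s z x - s z y"
  by (metis complex_cnj_diff sq_conj sq_diff_left)

lemma sq_scaleR_left: "s (r *\<^sub>R x) y = r *\<^sub>R s x y"
  by (simp add: scaleR_scaleC sq_scale_left scaleR_conv_of_real)

lemma sq_scaleR_right: "s x (r *\<^sub>R y) = r *\<^sub>R s x y"
  by (simp add: scaleR_scaleC sq_scale_right scaleR_conv_of_real)

lemma polarization:
  "4 * s x y = s (x + y) (x + y) - s (x - y) (x - y)
     + \<i> * s (x + \<i> *\<^sub>C y) (x + \<i> *\<^sub>C y) - \<i> * s (x - \<i> *\<^sub>C y) (x - \<i> *\<^sub>C y)"
  by (simp add: sq_add_left sq_add_right sq_diff_left sq_diff_right sq_scale_left sq_scale_right
      algebra_simps)

end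

lemma cmod_four_terms: "cmod (a - b + \<i> * c - \<i> * d) \<le> cmod a + cmod b + cmod c + cmod d"
proof -
  have "cmod (a - b + \<i> * c - \<i> * d) \<le> cmod (a - b) + cmod (\<i> * c) + cmod (\<i> * d)"
    by (meson add_mono norm_triangle_ineq norm_triangle_ineq4 order_trans order_refl)
  also have "\<dots> \<le> cmod a + cmod b + cmod c + cmod d"
    using norm_triangle_ineq4[of a b] by (simp add: norm_mult)
  finally show ?thesis .
qed

context
  fixes s :: "'a::complex_normed_vector \<Rightarrow> 'a \<Rightarrow> complex"
  assumes sq: "sesquilinear s"
begin

text \<open>A sesquilinear form bounded on the diagonal is bounded: first for the sum of the
  norms via polarization, then homogeneously by rescaling to unit vectors.\<close>

lemma sq_bound_by_sum:
  assumes diag: "\<And>z. cmod (s z z) \<le> C * (norm z)\<^sup>2" and C: "C \<ge> 0"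
  shows "cmod (s x y) \<le> C * (norm x + norm y)\<^sup>2"
proof -
  have diag_le: "cmod (s z z) \<le> C * (norm x + norm y)\<^sup>2" if "norm z \<le> norm x + norm y" for z
    using diag[of z] that C by (meson mult_left_mono norm_ge_zero order_trans power_mono)
  have ni: "norm (\<i> *\<^sub>C y) = norm y"
    by (simp add: norm_scaleC)
  have "4 * cmod (s x y) = cmod (4 * s x y)"
    by (simp add: norm_mult)
  also have "\<dots> \<le> cmod (s (x + y) (x + y)) + cmod (s (x - y) (x - y))
      + cmod (s (x + \<i> *\<^sub>C y) (x + \<i> *\<^sub>C y)) + cmod (s (x - \<i> *\<^sub>C y) (x - \<i> *\<^sub>C y))"
    unfolding polarization[OF sq]
    by (rule cmod_four_terms)
  also have "\<dots> \<le> 4 * (C * (norm x + norm y)\<^sup>2)"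
    using diag_le[OF norm_triangle_ineq] diag_le[OF norm_triangle_ineq4]
      diag_le[of "x + \<i> *\<^sub>C y"] diag_le[of "x - \<i> *\<^sub>C y"]
      norm_triangle_ineq[of x "\<i> *\<^sub>C y"] norm_triangle_ineq4[of x "\<i> *\<^sub>C y"] ni
    by simp
  finally show ?thesis
    by simp
qed

lemma sq_bound:
  assumes diag: "\<And>z. cmod (s z z) \<le> C * (norm z)\<^sup>2" and C: "C \<ge> 0"
  shows "cmod (s x y) \<le> 4 * C * norm x * norm y"
proof (cases "x = 0 \<or> y = 0")
  case True
  then show ?thesis
    using sq_scaleR_left[OF sq, of 0] sq_scaleR_right[OF sq, of _ 0] by auto
next
  case False
  define x1 where "x1 = (1 / norm x) *\<^sub>R x"
  define y1 where "y1 = (1 / norm y) *\<^sub>R y"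
  have unit: "norm x1 = 1" "norm y1 = 1"
    using False by (simp_all add: x1_def y1_def)
  have "s x y = (norm x * norm y) *\<^sub>R s x1 y1"
    using False by (simp add: x1_def y1_def sq_scaleR_left[OF sq] sq_scaleR_right[OF sq])
  moreover have "cmod (s x1 y1) \<le> 4 * C"
    using sq_bound_by_sum[OF diag C, of x1 y1] unit by simp
  ultimately have "cmod (s x y) = norm x * norm y * cmod (s x1 y1)"
    by simp
  also have "\<dots> \<le> norm x * norm y * (4 * C)"
    using \<open>cmod (s x1 y1) \<le> 4 * C\<close> by (simp add: mult_left_mono)
  finally show ?thesis
    by (simp add: algebra_simps)
qed

end

text \<open>Both follow from the fundamental symmetry J: the J-inner
  product [J x, y] is bounded on the diagonal, hence bounded, and J itself is bounded.\<close>

lemma krein_space_bounded_bilinear: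
  fixes ip :: "'a::complex_normed_vector \<Rightarrow> 'a \<Rightarrow> complex"
  assumes "krein_space ip"
  shows "bounded_bilinear ip"
proof -
  have sq: "sesquilinear ip"
    using assms unfolding krein_space_def by blast
  obtain J c C where Jadd: "\<And>x y. J (x + y) = J x + J y"
    and Jscale: "\<And>a x. J (a *\<^sub>C x) = a *\<^sub>C J x"
    and JJ: "\<And>x. J (J x) = x" and Jsym: "\<And>x y. ip (J x) y = ip x (J y)"
    and c: "c > 0" and lower: "\<And>x. c * (norm x)\<^sup>2 \<le> Re (ip (J x) x)"
    and upper: "\<And>x. Re (ip (J x) x) \<le> C * (norm x)\<^sup>2"
    using assms unfolding krein_space_def by metis
  define h where "h x y = ip (J x) y" for x y
  have h_sq: "sesquilinear h"
    unfolding sesquilinear_def h_def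
  proof (intro conjI allI)
    show "ip (J y) x = cnj (ip (J x) y)" for x y
      using sq_conj[OF sq, of x "J y"] Jsym[of x y] by simp
  qed (simp_all add: Jadd Jscale sq_add_left[OF sq] sq_scale_left[OF sq])
  define C' where "C' = max C 0"
  have C': "C' \<ge> 0" and upper': "\<And>x. Re (ip (J x) x) \<le> C' * (norm x)\<^sup>2"
    unfolding C'_def using upper
    by (auto intro: order_trans[OF _ mult_right_mono[OF max.cobounded1 zero_le_power2]])
  have h_diag: "cmod (h z z) \<le> C' * (norm z)\<^sup>2" for z
  proof -
    have "h z z = complex_of_real (Re (h z z))"
      using sq_conj[OF h_sq, of z z] by (simp add: complex_eq_iff)
    moreover have "Re (h z z) \<ge> 0"
      using lower[of z] c unfolding h_def by (meson mult_nonneg_nonneg order_trans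
          less_imp_le zero_le_power2)
    ultimately have "cmod (h z z) = Re (h z z)"
      by (metis abs_of_nonneg norm_of_real)
    then show ?thesis
      using upper'[of z] unfolding h_def by simp
  qed
  have J_bound: "norm (J x) \<le> sqrt (C' / c) * norm x" for x
  proof -
    have "c * (norm (J x))\<^sup>2 \<le> Re (ip (J x) x)"
      using lower[of "J x"] JJ[of x] Jsym[of x x] by simp
    then have "(norm (J x))\<^sup>2 \<le> (C' / c) * (norm x)\<^sup>2"
      using upper'[of x] c by (simp add: field_simps)
    then have "norm (J x) \<le> sqrt ((C' / c) * (norm x)\<^sup>2)"
      by (rule real_le_rsqrt)
    also have "\<dots> = sqrt (C' / c) * norm x"
      by (simp only: real_sqrt_mult real_sqrt_abs abs_norm_cancel)
    finally show ?thesis .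
  qed
  have "cmod (ip x y) \<le> norm x * norm y * (4 * C' * sqrt (C' / c))" for x y
  proof -
    have "cmod (ip x y) = cmod (h (J x) y)"
      by (simp add: h_def JJ)
    also have "\<dots> \<le> 4 * C' * norm (J x) * norm y"
      by (rule sq_bound[OF h_sq h_diag C'])
    also have "\<dots> \<le> 4 * C' * (sqrt (C' / c) * norm x) * norm y"
      using J_bound C' by (intro mult_right_mono mult_left_mono) auto
    finally show ?thesis
      by (simp add: algebra_simps)
  qed
  then show ?thesis
    by unfold_locales (auto simp: sq_add_left[OF sq] sq_add_right[OF sq]
        sq_scaleR_left[OF sq] sq_scaleR_right[OF sq])
qed

lemma krein_space_nondegenerate:
  assumes "krein_space ip" and "\<And>x. ip x v = 0"
  shows "v = 0"
proof -
  obtain J c where "c > 0" and "c * (norm v)\<^sup>2 \<le> Re (ip (J v) v)"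
    using assms(1) unfolding krein_space_def by metis
  then show ?thesis
    using assms(2) by (simp add: mult_le_0_iff)
qed

text \<open>By Baire's theorem one of the closed sets
  \<open>closure {x. norm (F x) \<le> n}\<close> contains a ball; hence every x is approximated up to
  \<open>norm x / 2\<close> by a point with controlled image, and summing the resulting geometric
  correction series (using closedness of the graph) bounds F.\<close>

lemma Baire_closed_cover_ball:
  fixes E :: "nat \<Rightarrow> 'a::{real_normed_vector,complete_space} set"
  assumes closed: "\<And>n. closed (E n)" and cover: "(\<Union>n. E n) = UNIV"
  shows "\<exists>n x0 r. r > 0 \<and> ball x0 r \<subseteq> E n"
proof (rule ccontr)
  assume no_ball: "\<not> ?thesis"
  have "euclidean interior_of \<Union>(range E) = {}"
  proof (rule Baire_category_alt)
    show "completely_metrizable_space (euclidean::'a topology) \<or>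
        locally_compact_space (euclidean::'a topology) \<and> regular_space (euclidean::'a topology)"
      using completely_metrizable_space_euclidean by blast
    fix T assume "T \<in> range E"
    then obtain n where T: "T = E n"
      by auto
    have "interior T = {}"
      using no_ball T by (metis all_not_in_conv mem_interior)
    then show "closedin euclidean T \<and> euclidean interior_of T = {}"
      using closed T by (simp add: interior_of_openin)
  qed simp
  then show False
    using cover by (simp add: interior_of_openin)
qed

lemma closed_graph_approximation:
  fixes F :: "'a::banach \<Rightarrow> 'b::real_normed_vector"
  assumes lin: "linear F"
  obtains M g where "M \<ge> 0" "\<And>x. norm (x - g x) \<le> norm x / 2" "\<And>x. norm (F (g x)) \<le> M * norm x"
proof -
  define E where "E n = closure {x. norm (F x) \<le> real n}" for n
  have "x \<in> E (nat \<lceil>norm (F x)\<rceil>)" for x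
    unfolding E_def by (rule closure_subset[THEN subsetD]) (simp add: real_nat_ceiling_ge)
  then have "(\<Union>n. E n) = UNIV"
    by blast
  then obtain n x0 r where r: "r > 0" and ball: "ball x0 r \<subseteq> E n"
    using Baire_closed_cover_ball[of E] unfolding E_def by auto
  text \<open>Points of the ball \<open>ball 0 r\<close> are approximated by differences of good points.\<close>
  have near: "\<exists>z'. norm (z - z') < r / 4 \<and> norm (F z') \<le> 2 * real n" if "norm z < r" for z
  proof -
    have "x0 + z \<in> E n" "x0 \<in> E n"
      using ball that r by (auto simp: dist_norm)
    then obtain a b where a: "norm (F a) \<le> real n" "dist a (x0 + z) < r / 8"
      and b: "norm (F b) \<le> real n" "dist b x0 < r / 8"
      unfolding E_def closure_approachable using r by (metis divide_pos_pos mem_Collect_eq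
          zero_less_numeral)
    have "norm (F (a - b)) \<le> 2 * real n"
      using a b norm_triangle_ineq4[of "F a" "F b"] by (simp add: linear_diff[OF lin])
    moreover have "norm (z - (a - b)) < r / 4"
      using a b norm_triangle_ineq4[of "x0 + z - a" "x0 - b"]
      by (simp add: dist_norm norm_minus_commute algebra_simps)
    ultimately show ?thesis
      by blast
  qed
  define M where "M = 4 * real n / r"
  text \<open>Rescaling x into the ball gives the approximation with linear control.\<close>
  have "\<exists>x'. norm (x - x') \<le> norm x / 2 \<and> norm (F x') \<le> M * norm x" for x
  proof (cases "x = 0")
    case True
    then show ?thesis
      using linear_0[OF lin] by (intro exI[of _ 0]) simp
  next
    case False
    define t where "t = r / (2 * norm x)"
    have t: "t > 0" "norm (t *\<^sub>R x) < r"
      using r False unfolding t_def by simp_all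
    then obtain z' where z': "norm (t *\<^sub>R x - z') < r / 4" "norm (F z') \<le> 2 * real n"
      using near by blast
    have "x - (1 / t) *\<^sub>R z' = (1 / t) *\<^sub>R (t *\<^sub>R x - z')"
      using t by (simp add: scaleR_right_diff_distrib)
    then have "norm (x - (1 / t) *\<^sub>R z') = (1 / t) * norm (t *\<^sub>R x - z')"
      using t by simp
    also have "\<dots> \<le> norm x / 2"
      using z' t r False unfolding t_def by (simp add: field_simps)
    finally have "norm (x - (1 / t) *\<^sub>R z') \<le> norm x / 2" .
    moreover have "norm (F ((1 / t) *\<^sub>R z')) \<le> M * norm x"
      using z' t r False unfolding t_def M_def
      by (simp add: linear_scale[OF lin] field_simps)
    ultimately show ?thesis
      by blast
  qed
  then obtain g where "\<And>x. norm (x - g x) \<le> norm x / 2" "\<And>x. norm (F (g x)) \<le> M * norm x"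
    by metis
  moreover have "M \<ge> 0"
    using r unfolding M_def by simp
  ultimately show ?thesis
    using that by blast
qed

lemma closed_graph_theorem:
  fixes F :: "'a::banach \<Rightarrow> 'b::banach"
  assumes add: "\<And>x y. F (x + y) = F x + F y"
    and scale: "\<And>r x. F (r *\<^sub>R x) = r *\<^sub>R F x"
    and closed_graph: "\<And>w x v. w \<longlonglongrightarrow> x \<Longrightarrow> (\<lambda>k. F (w k)) \<longlonglongrightarrow> v \<Longrightarrow> F x = v"
  shows "bounded_linear F"
proof -
  have lin: "linear F"
    by (rule linearI) (use add scale in auto)
  obtain M g where M: "M \<ge> 0" and g_near: "\<And>x. norm (x - g x) \<le> norm x / 2"
    and g_bound: "\<And>x. norm (F (g x)) \<le> M * norm x"
    using closed_graph_approximation[OF lin] by blast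
  have "norm (F x) \<le> norm x * (2 * M)" for x
  proof -
    text \<open>Residuals of the successive approximations: \<open>x = (\<Sum>j<k. g (e j)) + e k\<close>.\<close>
    define e where "e k = ((\<lambda>y. y - g y) ^^ k) x" for k
    have e_Suc: "e (Suc k) = e k - g (e k)" for k
      unfolding e_def by simp
    have e_small: "norm (e k) \<le> norm x / 2 ^ k" for k
    proof (induction k)
      case (Suc k)
      have "norm (e (Suc k)) \<le> norm (e k) / 2"
        unfolding e_Suc by (rule g_near)
      also have "\<dots> \<le> norm x / 2 ^ Suc k"
        using Suc by (simp add: field_simps)
      finally show ?case .
    qed (simp add: e_def)
    have partial: "(\<Sum>j<k. g (e j)) = x - e k" for k
      by (induction k) (auto simp: e_Suc, simp add: e_def)
    have F_partial: "F (\<Sum>j<k. g (e j)) = (\<Sum>j<k. F (g (e j)))" for k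
      by (induction k) (auto simp: linear_0[OF lin] add)
    have term_bound: "norm (F (g (e j))) \<le> M * norm x * (1/2) ^ j" for j
      using g_bound[of "e j"] mult_left_mono[OF e_small[of j] M]
      by (simp add: power_divide)
    have geom: "summable (\<lambda>j. M * norm x * (1/2::real) ^ j)"
      by (intro summable_mult summable_geometric) simp
    have norm_summ: "summable (\<lambda>j. norm (F (g (e j))))"
      by (rule summable_comparison_test[OF _ geom]) (use term_bound in auto)
    then have summ: "summable (\<lambda>j. F (g (e j)))"
      by (rule summable_norm_cancel)
    have "e \<longlonglongrightarrow> 0"
      by (rule Lim_null_comparison[OF _ LIMSEQ_divide_realpow_zero[of 2 "norm x"]])
         (use e_small in auto)
    then have "(\<lambda>k. \<Sum>j<k. g (e j)) \<longlonglongrightarrow> x"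
      unfolding partial using tendsto_diff[of "\<lambda>_. x" x sequentially] by force
    then have Fx: "F x = (\<Sum>j. F (g (e j)))"
      by (rule closed_graph) (use summable_LIMSEQ[OF summ] in \<open>simp add: F_partial\<close>)
    have "norm (\<Sum>j. F (g (e j))) \<le> (\<Sum>j. norm (F (g (e j))))"
      by (rule summable_norm[OF norm_summ])
    also have "\<dots> \<le> (\<Sum>j. M * norm x * (1/2::real) ^ j)"
      by (rule suminf_le[OF term_bound norm_summ geom])
    also have "\<dots> = norm x * (2 * M)"
      using suminf_geometric[of "1/2::real"] by (simp add: suminf_mult)
    finally show ?thesis
      unfolding Fx .
  qed
  then show ?thesis
    by (rule bounded_linear_intro[OF add scale])
qed

lemma linear_operator_add:
  "linear_operator S \<Longrightarrow> (x, y) \<in> S \<Longrightarrow> (u, v) \<in> S \<Longrightarrow> (x + u, y + v) \<in> S"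
  unfolding linear_operator_def by blast

lemma linear_operator_scale:
  "linear_operator S \<Longrightarrow> (x, y) \<in> S \<Longrightarrow> (a *\<^sub>C x, a *\<^sub>C y) \<in> S"
  unfolding linear_operator_def by blast

lemma linear_operator_scaleR:
  "linear_operator S \<Longrightarrow> (x, y) \<in> S \<Longrightarrow> (r *\<^sub>R x, r *\<^sub>R y) \<in> S"
  using linear_operator_scale[of S x y "complex_of_real r"] by (simp add: scaleR_scaleC)

lemma linear_operator_diff:
  "linear_operator S \<Longrightarrow> (x, y) \<in> S \<Longrightarrow> (u, v) \<in> S \<Longrightarrow> (x - u, y - v) \<in> S"
  using linear_operator_add[of S x y "(-1) *\<^sub>R u" "(-1) *\<^sub>R v"] linear_operator_scaleR[of S u v "-1"]
  by simp

lemma linear_operator_single_valued: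
  assumes "linear_operator S" "(x, y) \<in> S" "(x, y') \<in> S"
  shows "y = y'"
  using linear_operator_diff[OF assms] assms(1) unfolding linear_operator_def by force

lemma linear_operator_relcomp:
  assumes P: "linear_operator P" and Q: "linear_operator Q"
  shows "linear_operator (P O Q)"
  unfolding linear_operator_def
proof (intro conjI allI impI)
  show "(0, 0) \<in> P O Q"
    using P Q unfolding linear_operator_def by blast
  show "(x + u, y + v) \<in> P O Q" if "(x, y) \<in> P O Q" "(u, v) \<in> P O Q" for x y u v
    using that linear_operator_add[OF P] linear_operator_add[OF Q] by blast
  show "(a *\<^sub>C x, a *\<^sub>C y) \<in> P O Q" if "(x, y) \<in> P O Q" for a x y
    using that linear_operator_scale[OF P] linear_operator_scale[OF Q] by blast
  show "y = 0" if y: "(0, y) \<in> P O Q" for y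
  proof -
    obtain u where "(0, u) \<in> P" "(u, y) \<in> Q"
      using y by blast
    moreover from this(1) have "u = 0"
      using P unfolding linear_operator_def by blast
    ultimately show ?thesis
      using Q unfolding linear_operator_def by blast
  qed
qed

lemma resolvent_operator:
  fixes S :: "('a::complex_normed_vector \<times> 'a) set"
  assumes S: "linear_operator S" and l: "l \<in> resolvent_set S"
  obtains R where "bounded_linear R"
    "\<And>w. \<exists>y. (R w, y) \<in> S \<and> y - l *\<^sub>C R w = w"
    "\<And>x y. (x, y) \<in> S \<Longrightarrow> x = R (y - l *\<^sub>C x)"
proof -
  obtain C where C: "\<And>x y. (x, y) \<in> S \<Longrightarrow> norm x \<le> C * norm (y - l *\<^sub>C x)"
    using l unfolding resolvent_set_def by blast
  define R where "R w = (SOME x. \<exists>y. (x, y) \<in> S \<and> y - l *\<^sub>C x = w)" for w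
  have R_solves: "\<exists>y. (R w, y) \<in> S \<and> y - l *\<^sub>C R w = w" for w
    using l someI_ex[of "\<lambda>x. \<exists>y. (x, y) \<in> S \<and> y - l *\<^sub>C x = w"]
    unfolding resolvent_set_def R_def by blast
  have R_unique: "x = R w" if "(x, y) \<in> S" "y - l *\<^sub>C x = w" for x y w
  proof -
    obtain y' where y': "(R w, y') \<in> S" "y' - l *\<^sub>C R w = w"
      using R_solves by blast
    have "norm (x - R w) \<le> C * norm ((y - y') - l *\<^sub>C (x - R w))"
      by (rule C[OF linear_operator_diff[OF S that(1) y'(1)]])
    also have "(y - y') - l *\<^sub>C (x - R w) = 0"
      using that(2) y'(2) by (simp add: scaleC_diff_right algebra_simps)
    finally show ?thesis
      by simp
  qed
  have R_add: "R (v + w) = R v + R w" for v w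
  proof -
    obtain y y' where "(R v, y) \<in> S" "y - l *\<^sub>C R v = v" "(R w, y') \<in> S" "y' - l *\<^sub>C R w = w"
      using R_solves by meson
    then have "(R v + R w, y + y') \<in> S" "(y + y') - l *\<^sub>C (R v + R w) = v + w"
      by (simp_all only: linear_operator_add[OF S] scaleC_add_right add_diff_add)
    then show ?thesis
      by (metis R_unique)
  qed
  have R_scale: "R (r *\<^sub>R w) = r *\<^sub>R R w" for r w
  proof -
    obtain y where "(R w, y) \<in> S" "y - l *\<^sub>C R w = w"
      using R_solves by meson
    then have "(r *\<^sub>R R w, r *\<^sub>R y) \<in> S" "r *\<^sub>R y - l *\<^sub>C (r *\<^sub>R R w) = r *\<^sub>R w"
      by (simp_all add: linear_operator_scaleR[OF S] scaleC_scaleR_commute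
          flip: scaleR_right_diff_distrib)
    then show ?thesis
      by (metis R_unique)
  qed
  have "norm (R w) \<le> norm w * max C 0" for w
  proof -
    obtain y where "(R w, y) \<in> S" "y - l *\<^sub>C R w = w"
      using R_solves by meson
    then have "norm (R w) \<le> C * norm w"
      using C by metis
    also have "\<dots> \<le> norm w * max C 0"
      by (metis max.cobounded1 mult.commute mult_right_mono norm_ge_zero)
    finally show ?thesis .
  qed
  then have "bounded_linear R"
    by (rule bounded_linear_intro[OF R_add R_scale])
  then show ?thesis
    using that R_solves R_unique by blast
qed

text \<open>For the product \<open>Q P\<close> (the relation \<open>P O Q\<close>) with P closed, the resolvent
  \<open>R = (Q P - l)\<^sup>-\<^sup>1\<close> factors through P: also \<open>F = P R\<close> is a bounded operator, by the
  closed graph theorem, and \<open>Q F = I + l R\<close>.\<close>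

lemma resolvent_factorization:
  fixes P Q :: "('a::{complex_normed_vector,banach} \<times> 'a) set"
  assumes P: "linear_operator P" and Q: "linear_operator Q" and closed: "closed P"
    and l: "l \<in> resolvent_set (P O Q)"
  obtains R F where "bounded_linear R" "bounded_linear F"
    "\<And>w. (R w, F w) \<in> P" "\<And>w. (F w, w + l *\<^sub>C R w) \<in> Q"
    "\<And>x u z. (x, u) \<in> P \<Longrightarrow> (u, z) \<in> Q \<Longrightarrow> x = R (z - l *\<^sub>C x) \<and> u = F (z - l *\<^sub>C x)"
proof -
  obtain R where R: "bounded_linear R"
    and R_solves: "\<And>w. \<exists>y. (R w, y) \<in> P O Q \<and> y - l *\<^sub>C R w = w"
    and R_unique: "\<And>x y. (x, y) \<in> P O Q \<Longrightarrow> x = R (y - l *\<^sub>C x)"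
    using resolvent_operator[OF linear_operator_relcomp[OF P Q] l] by blast
  have "\<exists>u. (R w, u) \<in> P \<and> (u, w + l *\<^sub>C R w) \<in> Q" for w
    using R_solves[of w] by (auto simp: diff_eq_eq)
  then obtain F where RF: "\<And>w. (R w, F w) \<in> P" and FQ: "\<And>w. (F w, w + l *\<^sub>C R w) \<in> Q"
    by metis
  have F_eq: "F w = v" if "(R w, v) \<in> P" for w v
    using linear_operator_single_valued[OF P RF that] .
  have F_add: "F (v + w) = F v + F w" for v w
    using linear_operator_add[OF P RF RF, of v w] F_eq
    by (simp add: bounded_linear.linear[OF R] linear_add)
  have F_scale: "F (r *\<^sub>R w) = r *\<^sub>R F w" for r w
    using linear_operator_scaleR[OF P RF, of r w] F_eq
    by (simp add: bounded_linear.linear[OF R] linear_scale)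
  have F_closed: "F x = v" if "w \<longlonglongrightarrow> x" "(\<lambda>k. F (w k)) \<longlonglongrightarrow> v" for w x v
  proof -
    have "(\<lambda>k. (R (w k), F (w k))) \<longlonglongrightarrow> (R x, v)"
      using bounded_linear.tendsto[OF R that(1)] that(2) by (rule tendsto_Pair)
    then have "(R x, v) \<in> P"
      using closed RF by (meson closed_sequentially)
    then show ?thesis
      by (rule F_eq)
  qed
  have "bounded_linear F"
    by (rule closed_graph_theorem[OF F_add F_scale F_closed])
  moreover have "x = R (z - l *\<^sub>C x) \<and> u = F (z - l *\<^sub>C x)" if "(x, u) \<in> P" "(u, z) \<in> Q" for x u z
  proof
    show x_eq: "x = R (z - l *\<^sub>C x)"
      using R_unique[of x z] that by blast
    show "u = F (z - l *\<^sub>C x)"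
      using F_eq[of "z - l *\<^sub>C x" u] that(1) x_eq by simp
  qed
  ultimately show ?thesis
    by (rule that[OF R _ RF FQ])
qed

lemma resolvent_middle_bound:
  fixes P Q :: "('a::{complex_normed_vector,banach} \<times> 'a) set"
  assumes "linear_operator P" "linear_operator Q" "closed P" "l \<in> resolvent_set (P O Q)"
  obtains C where "\<And>x u z. (x, u) \<in> P \<Longrightarrow> (u, z) \<in> Q \<Longrightarrow> norm u \<le> C * norm (z - l *\<^sub>C x)"
proof -
  obtain R F where "bounded_linear R" and F: "bounded_linear F"
    and "\<And>w. (R w, F w) \<in> P" "\<And>w. (F w, w + l *\<^sub>C R w) \<in> Q"
    and factor: "\<And>x u z. (x, u) \<in> P \<Longrightarrow> (u, z) \<in> Q \<Longrightarrow> x = R (z - l *\<^sub>C x) \<and> u = F (z - l *\<^sub>C x)"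
    by (rule resolvent_factorization[OF assms]) blast
  obtain K where K: "\<And>v. norm (F v) \<le> norm v * K"
    using bounded_linear.bounded[OF F] by blast
  show ?thesis
  proof (rule that)
    fix x u z assume "(x, u) \<in> P" "(u, z) \<in> Q"
    then show "norm u \<le> K * norm (z - l *\<^sub>C x)"
      using K[of "z - l *\<^sub>C x"] factor by (simp add: mult.commute)
  qed
qed

lemma approx_point_spectrum_subset:
  "approx_point_spectrum S \<subseteq> spectrum_op S"
proof
  fix l assume "l \<in> approx_point_spectrum S"
  then obtain x y where xy: "\<And>n. (x n, y n) \<in> S" "\<And>n. norm (x n) = 1"
    and lim: "(\<lambda>n. y n - l *\<^sub>C x n) \<longlonglongrightarrow> 0"
    unfolding approx_point_spectrum_def by blast
  show "l \<in> spectrum_op S"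
    unfolding spectrum_op_def
  proof
    assume "l \<in> resolvent_set S"
    then obtain C where "\<And>x y. (x, y) \<in> S \<Longrightarrow> norm x \<le> C * norm (y - l *\<^sub>C x)"
      unfolding resolvent_set_def by blast
    then have C: "1 \<le> C * norm (y n - l *\<^sub>C x n)" for n
      using xy by metis
    have "(\<lambda>n. C * norm (y n - l *\<^sub>C x n)) \<longlonglongrightarrow> C * 0"
      using lim by (intro tendsto_intros) (simp add: tendsto_norm_zero_iff)
    then have "1 \<le> C * 0"
      by (rule LIMSEQ_le_const) (use C in simp)
    then show False
      by simp
  qed
qed

text \<open>The Krein space adjoint of a densely defined operator is a closed linear operator:
  linearity comes from sesquilinearity, single-valuedness from density of the domain and
  nondegeneracy of the form, and closedness from continuity of the form.\<close>

lemma krein_adjoint_closed_operator: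
  fixes ip :: "'a::complex_normed_vector \<Rightarrow> 'a \<Rightarrow> complex"
  assumes krein: "krein_space ip" and dense: "closure (Domain T) = UNIV"
  shows "linear_operator (krein_adjoint ip T)" "closed (krein_adjoint ip T)"
proof -
  have sq: "sesquilinear ip"
    using krein unfolding krein_space_def by blast
  interpret ip: bounded_bilinear ip
    by (rule krein_space_bounded_bilinear[OF krein])
  let ?A = "krein_adjoint ip T"
  have mem: "(y, z) \<in> ?A \<longleftrightarrow> (\<forall>x w. (x, w) \<in> T \<longrightarrow> ip w y = ip x z)" for y z
    unfolding krein_adjoint_def by auto
  show "linear_operator ?A"
    unfolding linear_operator_def
  proof (intro conjI allI impI)
    show "(0, 0) \<in> ?A"
      unfolding mem by (simp add: ip.zero_right)
    show "(x + u, y + v) \<in> ?A" if "(x, y) \<in> ?A" "(u, v) \<in> ?A" for x y u v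
      using that unfolding mem by (simp add: ip.add_right)
    show "(a *\<^sub>C x, a *\<^sub>C y) \<in> ?A" if "(x, y) \<in> ?A" for a x y
      using that unfolding mem by (simp add: sq_scale_right[OF sq])
    show "y = 0" if y: "(0, y) \<in> ?A" for y
    proof (rule krein_space_nondegenerate[OF krein])
      have "Domain T \<subseteq> {x. ip x y = 0}"
        using y unfolding mem by (auto simp: ip.zero_right)
      moreover have "closed {x. ip x y = 0}"
        by (intro closed_Collect_eq continuous_on_const linear_continuous_on ip.bounded_linear_left)
      ultimately have "closure (Domain T) \<subseteq> {x. ip x y = 0}"
        by (rule closure_minimal)
      then show "ip x y = 0" for x
        using dense by auto
    qed
  qed
  show "closed ?A"
    unfolding closed_sequential_limits
  proof (intro allI impI)
    fix f p assume f: "(\<forall>n. f n \<in> ?A) \<and> f \<longlonglongrightarrow> p"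
    have "ip w (fst p) = ip x (snd p)" if "(x, w) \<in> T" for x w
    proof (rule LIMSEQ_unique)
      show "(\<lambda>n. ip w (fst (f n))) \<longlonglongrightarrow> ip w (fst p)"
        using f by (intro ip.tendsto tendsto_intros) auto
      have "ip w (fst (f n)) = ip x (snd (f n))" for n
        using f that mem[of "fst (f n)" "snd (f n)"] by simp
      then show "(\<lambda>n. ip w (fst (f n))) \<longlonglongrightarrow> ip x (snd p)"
        using f by (simp, intro ip.tendsto tendsto_intros) auto
    qed
    then show "p \<in> ?A"
      unfolding krein_adjoint_def by auto
  qed
qed

text \<open>All four kinds of definite spectral points share one shape: every (weakly null, for the
  \<open>\<pi>\<close>-types) normalized approximate eigensequence is eventually uniformly positive for
  \<open>\<sigma> [x, x]\<close>, where the sign \<open>\<sigma>\<close> is 1 or -1.\<close>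

definition sign_definite ::
  "('a::complex_normed_vector \<Rightarrow> 'a \<Rightarrow> complex) \<Rightarrow> ('a \<times> 'a) set \<Rightarrow> complex \<Rightarrow> bool \<Rightarrow> real \<Rightarrow> bool"
where
  "sign_definite ip S l weak \<sigma> \<longleftrightarrow>
     (\<forall>x y. (\<forall>n. (x n, y n) \<in> S \<and> norm (x n) = 1) \<longrightarrow> (weak \<longrightarrow> weakly_to_zero x) \<longrightarrow>
        (\<lambda>n. y n - l *\<^sub>C x n) \<longlonglongrightarrow> 0 \<longrightarrow>
        (\<exists>e>0. \<forall>\<^sub>F n in sequentially. e < \<sigma> * Re (ip (x n) (x n))))"

definition typed_spectrum ::
  "('a::complex_normed_vector \<Rightarrow> 'a \<Rightarrow> complex) \<Rightarrow> ('a \<times> 'a) set \<Rightarrow> bool \<Rightarrow> real \<Rightarrow> complex set"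
where
  "typed_spectrum ip S weak \<sigma> =
     {l \<in> spectrum_op S. l \<in> approx_point_spectrum S \<and> sign_definite ip S l weak \<sigma>}"

lemma liminf_pos_iff_eventually:
  "0 < liminf (\<lambda>n. ereal (b n)) \<longleftrightarrow> (\<exists>e>0. \<forall>\<^sub>F n in sequentially. e < b n)"
proof
  assume "0 < liminf (\<lambda>n. ereal (b n))"
  then obtain e where "0 < ereal e" "ereal e < liminf (\<lambda>n. ereal (b n))"
    using ereal_dense2 by blast
  then show "\<exists>e>0. \<forall>\<^sub>F n in sequentially. e < b n"
    using less_LiminfD by fastforce
next
  assume "\<exists>e>0. \<forall>\<^sub>F n in sequentially. e < b n"
  then obtain e where e: "e > 0" "\<forall>\<^sub>F n in sequentially. e < b n"
    by blast
  from e(2) have "\<forall>\<^sub>F n in sequentially. ereal e \<le> ereal (b n)"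
    by eventually_elim simp
  then have "ereal e \<le> liminf (\<lambda>n. ereal (b n))"
    by (rule Liminf_bounded)
  moreover have "0 < ereal e"
    using e(1) by simp
  ultimately show "0 < liminf (\<lambda>n. ereal (b n))"
    by (rule order_less_le_trans[rotated])
qed

lemma limsup_neg_iff_eventually:
  "limsup (\<lambda>n. ereal (b n)) < 0 \<longleftrightarrow> (\<exists>e>0. \<forall>\<^sub>F n in sequentially. e < - b n)"
proof
  assume "limsup (\<lambda>n. ereal (b n)) < 0"
  then obtain e where "limsup (\<lambda>n. ereal (b n)) < ereal e" "ereal e < 0"
    using ereal_dense2 by blast
  then show "\<exists>e>0. \<forall>\<^sub>F n in sequentially. e < - b n"
    using Limsup_lessD by (intro exI[of _ "- e"]) (fastforce elim: eventually_mono)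
next
  assume "\<exists>e>0. \<forall>\<^sub>F n in sequentially. e < - b n"
  then obtain e where e: "e > 0" "\<forall>\<^sub>F n in sequentially. e < - b n"
    by blast
  from e(2) have "\<forall>\<^sub>F n in sequentially. ereal (b n) \<le> ereal (- e)"
    by eventually_elim simp
  then have "limsup (\<lambda>n. ereal (b n)) \<le> ereal (- e)"
    by (rule Limsup_bounded)
  moreover have "ereal (- e) < 0"
    using e(1) by simp
  ultimately show "limsup (\<lambda>n. ereal (b n)) < 0"
    by (rule order_le_less_trans)
qed

lemma spectra_of_type:
  "spec_pos_type ip S = typed_spectrum ip S False 1"
  "spec_neg_type ip S = typed_spectrum ip S False (-1)"
  "spec_pi_plus ip S = typed_spectrum ip S True 1"
  "spec_pi_minus ip S = typed_spectrum ip S True (-1)"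
  unfolding spec_pos_type_def spec_neg_type_def spec_pi_plus_def spec_pi_minus_def
    typed_spectrum_def sign_definite_def liminf_pos_iff_eventually limsup_neg_iff_eventually
  by simp_all

lemma eventually_positive_transfer:
  fixes s b t :: "nat \<Rightarrow> real"
  assumes c: "c > 0" "\<And>n. c \<le> s n" and lim: "(\<lambda>n. (s n)\<^sup>2 * b n - t n) \<longlonglongrightarrow> 0"
    and e: "e > 0" "\<forall>\<^sub>F n in sequentially. e < b n"
  shows "\<forall>\<^sub>F n in sequentially. c\<^sup>2 * e / 2 < t n"
proof -
  have "\<forall>\<^sub>F n in sequentially. \<bar>(s n)\<^sup>2 * b n - t n\<bar> < c\<^sup>2 * e / 2"
    using tendstoD[OF lim, of "c\<^sup>2 * e / 2"] c e by (simp add: dist_real_def)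
  with e(2) show ?thesis
  proof eventually_elim
    case (elim n)
    have "c\<^sup>2 \<le> (s n)\<^sup>2"
      using c by (intro power_mono) simp_all
    then have "c\<^sup>2 * e \<le> (s n)\<^sup>2 * b n"
      using elim e(1) by (intro mult_mono) simp_all
    then show ?case
      using elim by linarith
  qed
qed

lemma weakly_to_zero_bounded_linear:
  assumes "weakly_to_zero x" and "bounded_linear G"
  shows "weakly_to_zero (\<lambda>n. G (x n))"
  using assms bounded_linear_compose[of _ G] unfolding weakly_to_zero_def by blast

lemma tendsto_zero_rescaled_tail:
  fixes g :: "nat \<Rightarrow> 'b::real_normed_vector"
  assumes g: "g \<longlonglongrightarrow> 0" and k: "\<And>n. \<bar>k n\<bar> \<le> B"
  shows "(\<lambda>n. k n *\<^sub>R g (max n N)) \<longlonglongrightarrow> 0"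
proof (rule Lim_null_comparison)
  have "(\<lambda>n. g (max n N)) \<longlonglongrightarrow> 0"
    using g by (rule Lim_transform_eventually) (auto intro: eventually_sequentiallyI[of N])
  then show "(\<lambda>n. B * norm (g (max n N))) \<longlonglongrightarrow> 0"
    by (intro tendsto_mult_right_zero tendsto_norm_zero)
  show "\<forall>\<^sub>F n in sequentially. norm (k n *\<^sub>R g (max n N)) \<le> B * norm (g (max n N))"
    using k by (simp add: mult_right_mono)
qed

lemma approx_eigen_normalize:
  fixes S :: "('a::complex_normed_vector \<times> 'a) set"
  assumes S: "linear_operator S" and yw: "\<And>n. (y n, w n) \<in> S"
    and lim: "(\<lambda>n. w n - l *\<^sub>C y n) \<longlonglongrightarrow> 0"
    and c: "c > 0" and eventually_lower: "\<forall>\<^sub>F n in sequentially. c \<le> norm (y n)"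
  obtains y' w' s where "\<And>n. (y' n, w' n) \<in> S" "\<And>n. norm (y' n) = 1"
    "(\<lambda>n. w' n - l *\<^sub>C y' n) \<longlonglongrightarrow> 0" "\<And>n. c \<le> s n"
    "\<forall>\<^sub>F n in sequentially. y n = s n *\<^sub>R y' n" "weakly_to_zero y \<Longrightarrow> weakly_to_zero y'"
proof -
  obtain N where lower: "\<And>n. N \<le> n \<Longrightarrow> c \<le> norm (y n)"
    using eventually_lower unfolding eventually_sequentially by blast
  define s where "s n = norm (y (max n N))" for n
  define y' where "y' n = (1 / s n) *\<^sub>R y (max n N)" for n
  define w' where "w' n = (1 / s n) *\<^sub>R w (max n N)" for n
  have s: "c \<le> s n" for n
    unfolding s_def by (rule lower) simp
  then have nonzero: "y (max n N) \<noteq> 0" for n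
    using c s[of n] unfolding s_def by force
  have inv_s: "\<bar>1 / s n\<bar> \<le> 1 / c" for n
    using s[of n] c by (simp add: frac_le)
  have "(\<lambda>n. (1 / s n) *\<^sub>R (w (max n N) - l *\<^sub>C y (max n N))) \<longlonglongrightarrow> 0"
    using tendsto_zero_rescaled_tail[OF lim inv_s] .
  then have "(\<lambda>n. w' n - l *\<^sub>C y' n) \<longlonglongrightarrow> 0"
    by (simp add: w'_def y'_def scaleC_scaleR_commute scaleR_right_diff_distrib)
  moreover have "\<forall>\<^sub>F n in sequentially. y n = s n *\<^sub>R y' n"
  proof (rule eventually_sequentiallyI[of N])
    fix n assume "N \<le> n"
    then show "y n = s n *\<^sub>R y' n"
      using nonzero[of n] by (simp add: y'_def s_def max_absorb1)
  qed
  moreover have "weakly_to_zero y'" if "weakly_to_zero y"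
    unfolding weakly_to_zero_def
  proof (intro allI impI)
    fix f :: "'a \<Rightarrow> real" assume f: "bounded_linear f"
    have "(\<lambda>n. (1 / s n) *\<^sub>R f (y (max n N))) \<longlonglongrightarrow> 0"
      using that f unfolding weakly_to_zero_def by (intro tendsto_zero_rescaled_tail[OF _ inv_s]) blast
    then show "(\<lambda>n. f (y' n)) \<longlonglongrightarrow> 0"
      by (simp add: y'_def linear_scale[OF bounded_linear.linear[OF f]])
  qed
  moreover have "(y' n, w' n) \<in> S" "norm (y' n) = 1" for n
    using linear_operator_scaleR[OF S yw] nonzero[of n] by (simp_all add: y'_def w'_def s_def)
  ultimately show ?thesis
    using that s by blast
qed

locale bounded_sesquilinear_form = bounded_bilinear ip
  for ip :: "'a::complex_normed_vector \<Rightarrow> 'a \<Rightarrow> complex" +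
  assumes sesquilinear: "sesquilinear ip"
begin

lemma tendsto_form_zero:
  assumes "Bseq f" and "g \<longlonglongrightarrow> 0"
  shows "(\<lambda>n. ip (f n) (g n)) \<longlonglongrightarrow> 0" and "(\<lambda>n. ip (g n) (f n)) \<longlonglongrightarrow> 0"
  using Bfun_prod_Zfun[OF assms(1)] Zfun_prod_Bfun[OF _ assms(1)] assms(2)
  by (simp_all add: tendsto_Zfun_iff)

lemma form_asymptotics:
  assumes x: "Bseq x" and xx': "(\<lambda>n. x n - x' n) \<longlonglongrightarrow> 0" and ax': "(\<lambda>n. a n - l *\<^sub>C x' n) \<longlonglongrightarrow> 0"
  shows "(\<lambda>n. ip (x' n) (a n) - cnj l * ip (x n) (x n)) \<longlonglongrightarrow> 0"
proof -
  obtain K1 K2 where K: "\<And>n. norm (x n) \<le> K1" "\<And>n. norm (x n - x' n) \<le> K2"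
    using x convergent_imp_Bseq[OF convergentI[OF xx']] unfolding Bseq_def by blast
  have "norm (x' n) \<le> K1 + K2" for n
    using norm_triangle_ineq4[of "x n" "x n - x' n"] K[of n] by simp
  then have x': "Bseq x'"
    by (rule BseqI')
  have "(\<lambda>n. ip (x' n) (a n - l *\<^sub>C x' n)
      - cnj l * (ip (x n - x' n) (x' n) + ip (x n) (x n - x' n))) \<longlonglongrightarrow> 0 - cnj l * (0 + 0)"
    by (intro tendsto_intros tendsto_form_zero x x' xx' ax')
  moreover have "ip (x' n) (a n - l *\<^sub>C x' n) - cnj l * (ip (x n - x' n) (x' n) + ip (x n) (x n - x' n))
      = ip (x' n) (a n) - cnj l * ip (x n) (x n)" for n
    by (simp add: sq_diff_left[OF sesquilinear] sq_diff_right[OF sesquilinear]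
        sq_scale_right[OF sesquilinear] algebra_simps)
  ultimately show ?thesis
    by simp
qed

end

locale adjoint_pair = bounded_sesquilinear_form ip
  for ip :: "'a::{complex_normed_vector,banach} \<Rightarrow> 'a \<Rightarrow> complex" +
  fixes P Q :: "('a \<times> 'a) set"
  assumes P: "linear_operator P" and Q: "linear_operator Q"
    and closed_P: "closed P" and closed_Q: "closed Q"
    and adjoint: "\<And>x u y v. (x, u) \<in> P \<Longrightarrow> (y, v) \<in> Q \<Longrightarrow> ip u y = ip x v"
    and resolvent_PQ: "resolvent_set (P O Q) \<noteq> {}"
    and resolvent_QP: "resolvent_set (Q O P) \<noteq> {}"
begin

text \<open>The roles of P and Q can be exchanged (the form is conjugate symmetric).\<close>

lemma swap: "adjoint_pair ip Q P"
proof -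
  have "ip u y = ip x v" if "(x, u) \<in> Q" "(y, v) \<in> P" for x u y v
    using adjoint[OF that(2,1)] sq_conj[OF sesquilinear, of x v] sq_conj[OF sesquilinear, of u y]
    by simp
  then show ?thesis
    unfolding adjoint_pair_def adjoint_pair_axioms_def
    using bounded_sesquilinear_form_axioms P Q closed_P closed_Q resolvent_PQ resolvent_QP by blast
qed


text \<open>Smoothing with the resolvent \<open>R = (Q P - \<mu>)\<^sup>-\<^sup>1\<close>: an approximate eigensequence x of
  \<open>Q P\<close> is replaced by the nearby \<open>x' = R ((l - \<mu>) x)\<close>, for which \<open>y = P x'\<close> lies in the
  domain of \<open>P Q\<close> and is an approximate eigensequence of \<open>P Q\<close>; y depends boundedly on x.\<close>

lemma approx_eigen_smoothing:
  assumes xu: "\<And>n. (x n, u n) \<in> P" and uz: "\<And>n. (u n, z n) \<in> Q"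
    and lim: "(\<lambda>n. z n - l *\<^sub>C x n) \<longlonglongrightarrow> 0"
  obtains x' y a w where "\<And>n. (x' n, y n) \<in> P" "\<And>n. (y n, a n) \<in> Q" "\<And>n. (a n, w n) \<in> P"
    "(\<lambda>n. x n - x' n) \<longlonglongrightarrow> 0" "(\<lambda>n. a n - l *\<^sub>C x' n) \<longlonglongrightarrow> 0" "(\<lambda>n. w n - l *\<^sub>C y n) \<longlonglongrightarrow> 0"
    "weakly_to_zero x \<Longrightarrow> weakly_to_zero y"
proof -
  obtain \<mu> where \<mu>: "\<mu> \<in> resolvent_set (P O Q)"
    using resolvent_PQ by blast
  obtain R F where R: "bounded_linear R" and F: "bounded_linear F"
    and RF: "\<And>w. (R w, F w) \<in> P" and FQ: "\<And>w. (F w, w + \<mu> *\<^sub>C R w) \<in> Q"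
    and factor: "\<And>x u z. (x, u) \<in> P \<Longrightarrow> (u, z) \<in> Q \<Longrightarrow> x = R (z - \<mu> *\<^sub>C x) \<and> u = F (z - \<mu> *\<^sub>C x)"
    by (rule resolvent_factorization[OF P Q closed_P \<mu>]) blast
  define c where "c = l - \<mu>"
  define r where "r n = z n - l *\<^sub>C x n" for n
  define x' where "x' n = R (c *\<^sub>C x n)" for n
  define y where "y n = F (c *\<^sub>C x n)" for n
  define a where "a n = c *\<^sub>C x n + \<mu> *\<^sub>C x' n" for n
  define w where "w n = c *\<^sub>C u n + \<mu> *\<^sub>C y n" for n
  have "z n - \<mu> *\<^sub>C x n = c *\<^sub>C x n + r n" for n
    by (simp add: c_def r_def scaleC_diff_left)
  then have "x n = x' n + R (r n) \<and> u n = y n + F (r n)" for n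
    using factor[OF xu uz, of n] linear_add[OF bounded_linear.linear[OF R]]
      linear_add[OF bounded_linear.linear[OF F]] by (simp add: x'_def y_def)
  then have x_split: "x n - x' n = R (r n)" and u_split: "u n - y n = F (r n)" for n
    by (metis add_diff_cancel_left')+
  have "a n - l *\<^sub>C x' n = c *\<^sub>C (x n - x' n)" "w n - l *\<^sub>C y n = c *\<^sub>C (u n - y n)" for n
    by (simp_all add: a_def w_def c_def scaleC_diff_left scaleC_diff_right algebra_simps)
  then have "(\<lambda>n. a n - l *\<^sub>C x' n) \<longlonglongrightarrow> 0" "(\<lambda>n. w n - l *\<^sub>C y n) \<longlonglongrightarrow> 0"
    "(\<lambda>n. x n - x' n) \<longlonglongrightarrow> 0"
    unfolding x_split u_split r_def
    using lim bounded_linear.tendsto_zero[OF bounded_linear_compose[OF bounded_linear_scaleC R]]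
      bounded_linear.tendsto_zero[OF bounded_linear_compose[OF bounded_linear_scaleC F]]
      bounded_linear.tendsto_zero[OF R] by simp_all
  moreover have "weakly_to_zero y" if "weakly_to_zero x"
    unfolding y_def by (rule weakly_to_zero_bounded_linear[OF that
          bounded_linear_compose[OF F bounded_linear_scaleC]])
  moreover have "(x' n, y n) \<in> P" "(y n, a n) \<in> Q" "(a n, w n) \<in> P" for n
    using RF FQ linear_operator_add[OF P linear_operator_scale[OF P xu] linear_operator_scale[OF P RF]]
    by (simp_all add: x'_def y_def a_def w_def)
  ultimately show ?thesis
    using that by blast
qed

text \<open>Using the resolvent of \<open>P Q\<close> in turn: \<open>a = Q y\<close> is controlled by \<open>P Q y - \<nu> y\<close>.  As
  \<open>a \<approx> l x'\<close> has norm close to \<open>\<bar>l\<bar>\<close>, the sequence y stays away from 0 when \<open>l \<noteq> 0\<close>.\<close>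

lemma approx_eigen_lower_bound:
  assumes l: "l \<noteq> 0" and ya: "\<And>n. (y n, a n) \<in> Q" and aw: "\<And>n. (a n, w n) \<in> P"
    and x: "\<And>n. norm (x n) = 1" and xx': "(\<lambda>n. x n - x' n) \<longlonglongrightarrow> 0"
    and ax': "(\<lambda>n. a n - l *\<^sub>C x' n) \<longlonglongrightarrow> 0" and wy: "(\<lambda>n. w n - l *\<^sub>C y n) \<longlonglongrightarrow> 0"
  obtains c where "c > 0" "\<forall>\<^sub>F n in sequentially. c \<le> norm (y n)"
proof -
  obtain \<nu> where \<nu>: "\<nu> \<in> resolvent_set (Q O P)"
    using resolvent_QP by blast
  obtain C where C: "\<And>y a w. (y, a) \<in> Q \<Longrightarrow> (a, w) \<in> P \<Longrightarrow> norm a \<le> C * norm (w - \<nu> *\<^sub>C y)"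
    by (rule resolvent_middle_bound[OF Q P closed_Q \<nu>]) blast
  define L where "L = cmod l"
  define K where "K = \<bar>C\<bar> * cmod (l - \<nu>) + 1"
  have L: "L > 0" and K: "K > 0"
    using l by (simp_all add: L_def K_def add_nonneg_pos)
  have "\<forall>\<^sub>F n in sequentially. norm (x n - x' n) < 1/4"
    "\<forall>\<^sub>F n in sequentially. norm (a n - l *\<^sub>C x' n) < L/4"
    "\<forall>\<^sub>F n in sequentially. \<bar>C\<bar> * norm (w n - l *\<^sub>C y n) < L/4"
    using tendstoD[OF xx', of "1/4"] tendstoD[OF ax', of "L/4"] L
      tendstoD[OF tendsto_mult_right_zero[OF tendsto_norm_zero[OF wy]], of "L/4" "\<bar>C\<bar>"]
    by (simp_all add: dist_norm)
  then have "\<forall>\<^sub>F n in sequentially. L / (4 * K) \<le> norm (y n)"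
  proof eventually_elim
    case (elim n)
    have "3/4 \<le> norm (x' n)"
      using x[of n] elim(1) norm_triangle_ineq2[of "x n" "x' n"] by simp
    then have "3/4 * L \<le> norm (l *\<^sub>C x' n)"
      using L by (simp add: norm_scaleC L_def)
    then have "L/2 < norm (a n)"
      using elim(2) norm_triangle_ineq2[of "l *\<^sub>C x' n" "a n"] by (simp add: norm_minus_commute)
    also have "norm (a n) \<le> \<bar>C\<bar> * norm (w n - \<nu> *\<^sub>C y n)"
      using C[OF ya aw, of n] by (meson abs_ge_self mult_right_mono norm_ge_zero order_trans)
    also have "\<dots> \<le> \<bar>C\<bar> * (norm (w n - l *\<^sub>C y n) + cmod (l - \<nu>) * norm (y n))"
    proof (intro mult_left_mono)
      have "w n - \<nu> *\<^sub>C y n = (w n - l *\<^sub>C y n) + (l - \<nu>) *\<^sub>C y n"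
        by (simp add: scaleC_diff_left)
      then show "norm (w n - \<nu> *\<^sub>C y n) \<le> norm (w n - l *\<^sub>C y n) + cmod (l - \<nu>) * norm (y n)"
        by (metis norm_scaleC norm_triangle_ineq)
    qed simp
    finally have "L/4 < \<bar>C\<bar> * cmod (l - \<nu>) * norm (y n)"
      using elim(3) by (simp add: algebra_simps)
    also have "\<dots> \<le> K * norm (y n)"
      unfolding K_def by (simp add: mult_right_mono)
    finally show ?case
      using K by (simp add: field_simps)
  qed
  moreover have "L / (4 * K) > 0"
    using L K by simp
  ultimately show ?thesis
    using that by blast
qed


lemma approx_eigen_transfer:
  assumes l: "l \<noteq> 0" and xz: "\<And>n. (x n, z n) \<in> P O Q" and x: "\<And>n. norm (x n) = 1"
    and lim: "(\<lambda>n. z n - l *\<^sub>C x n) \<longlonglongrightarrow> 0"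
  obtains y w s c where "\<And>n. (y n, w n) \<in> Q O P" "\<And>n. norm (y n) = 1"
    "(\<lambda>n. w n - l *\<^sub>C y n) \<longlonglongrightarrow> 0" "c > 0" "\<And>n. c \<le> s n"
    "(\<lambda>n. complex_of_real ((s n)\<^sup>2) * ip (y n) (y n) - cnj l * ip (x n) (x n)) \<longlonglongrightarrow> 0"
    "weakly_to_zero x \<Longrightarrow> weakly_to_zero y"
proof -
  have "\<forall>n. \<exists>u. (x n, u) \<in> P \<and> (u, z n) \<in> Q"
    using xz by blast
  then obtain u where xu: "\<And>n. (x n, u n) \<in> P" and uz: "\<And>n. (u n, z n) \<in> Q"
    by metis
  obtain x' y0 a w0 where x'y0: "\<And>n. (x' n, y0 n) \<in> P" and y0a: "\<And>n. (y0 n, a n) \<in> Q"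
    and aw0: "\<And>n. (a n, w0 n) \<in> P" and xx': "(\<lambda>n. x n - x' n) \<longlonglongrightarrow> 0"
    and ax': "(\<lambda>n. a n - l *\<^sub>C x' n) \<longlonglongrightarrow> 0" and w0y0: "(\<lambda>n. w0 n - l *\<^sub>C y0 n) \<longlonglongrightarrow> 0"
    and weak0: "weakly_to_zero x \<Longrightarrow> weakly_to_zero y0"
    by (rule approx_eigen_smoothing[OF xu uz lim]) blast
  obtain c where c: "c > 0" and lower: "\<forall>\<^sub>F n in sequentially. c \<le> norm (y0 n)"
    by (rule approx_eigen_lower_bound[OF l y0a aw0 x xx' ax' w0y0]) blast
  have y0w0: "(y0 n, w0 n) \<in> Q O P" for n
    using y0a aw0 by blast
  obtain y w s where yw: "\<And>n. (y n, w n) \<in> Q O P" "\<And>n. norm (y n) = 1"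
    "(\<lambda>n. w n - l *\<^sub>C y n) \<longlonglongrightarrow> 0" and s: "\<And>n. c \<le> s n"
    and y0_eq: "\<forall>\<^sub>F n in sequentially. y0 n = s n *\<^sub>R y n"
    and weak: "weakly_to_zero y0 \<Longrightarrow> weakly_to_zero y"
    by (rule approx_eigen_normalize[OF linear_operator_relcomp[OF Q P] y0w0 w0y0 c lower]) blast
  text \<open>By adjointness \<open>[y0, y0] = [x', a]\<close>, which is asymptotic to \<open>cnj l [x, x]\<close>.\<close>
  have "Bseq x"
    using x by (intro BseqI'[of _ 1]) simp
  then have "(\<lambda>n. ip (x' n) (a n) - cnj l * ip (x n) (x n)) \<longlonglongrightarrow> 0"
    by (rule form_asymptotics[OF _ xx' ax'])
  then have "(\<lambda>n. ip (y0 n) (y0 n) - cnj l * ip (x n) (x n)) \<longlonglongrightarrow> 0"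
    by (simp add: adjoint[OF x'y0 y0a])
  moreover have "\<forall>\<^sub>F n in sequentially. ip (y0 n) (y0 n) - cnj l * ip (x n) (x n)
      = complex_of_real ((s n)\<^sup>2) * ip (y n) (y n) - cnj l * ip (x n) (x n)"
    using y0_eq
    by eventually_elim (simp add: scaleR_left scaleR_right power2_eq_square scaleR_conv_of_real)
  ultimately have "(\<lambda>n. complex_of_real ((s n)\<^sup>2) * ip (y n) (y n) - cnj l * ip (x n) (x n))
      \<longlonglongrightarrow> 0"
    by (rule Lim_transform_eventually)
  then show ?thesis
    using that yw c s weak weak0 by blast
qed


lemma approx_point_spectrum_transfer:
  assumes "l \<noteq> 0" and "l \<in> approx_point_spectrum (P O Q)"
  shows "l \<in> approx_point_spectrum (Q O P)"
proof -
  obtain x z where "\<And>n. (x n, z n) \<in> P O Q" "\<And>n. norm (x n) = 1"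
    "(\<lambda>n. z n - l *\<^sub>C x n) \<longlonglongrightarrow> 0"
    using assms(2) unfolding approx_point_spectrum_def by blast
  then obtain y w where "\<And>n. (y n, w n) \<in> Q O P" "\<And>n. norm (y n) = 1"
    "(\<lambda>n. w n - l *\<^sub>C y n) \<longlonglongrightarrow> 0"
    by (rule approx_eigen_transfer[OF assms(1)]) blast
  then show ?thesis
    unfolding approx_point_spectrum_def by blast
qed

text \<open>At a real \<open>r \<noteq> 0\<close>, \<open>s\<^sup>2 [y, y] \<approx> r [x, x]\<close>: sign definiteness of \<open>P Q\<close> with sign
  \<open>sgn r \<sigma>\<close> gives sign definiteness of \<open>Q P\<close> with sign \<open>\<sigma>\<close>.\<close>

lemma sign_definite_transfer:
  assumes r: "r \<noteq> 0" and definite: "sign_definite ip (Q O P) (of_real r) weak (sgn r * \<sigma>)"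
  shows "sign_definite ip (P O Q) (of_real r) weak \<sigma>"
  unfolding sign_definite_def
proof (intro allI impI)
  fix x z assume xz: "\<forall>n. (x n, z n) \<in> P O Q \<and> norm (x n) = 1"
    and weak_x: "weak \<longrightarrow> weakly_to_zero x" and lim: "(\<lambda>n. z n - of_real r *\<^sub>C x n) \<longlonglongrightarrow> 0"
  obtain y w s c where yw: "\<And>n. (y n, w n) \<in> Q O P" "\<And>n. norm (y n) = 1"
    "(\<lambda>n. w n - of_real r *\<^sub>C y n) \<longlonglongrightarrow> 0" and c: "c > 0" "\<And>n. c \<le> s n"
    and rel: "(\<lambda>n. complex_of_real ((s n)\<^sup>2) * ip (y n) (y n) - cnj (of_real r) * ip (x n) (x n))
      \<longlonglongrightarrow> 0"
    and weak_y: "weakly_to_zero x \<Longrightarrow> weakly_to_zero y"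
    by (rule approx_eigen_transfer[of "of_real r" x z]) (use r xz lim in \<open>simp_all, blast\<close>)
  obtain e where e: "e > 0" "\<forall>\<^sub>F n in sequentially. e < sgn r * \<sigma> * Re (ip (y n) (y n))"
    using definite yw weak_x weak_y unfolding sign_definite_def by blast
  have "(\<lambda>n. sgn r * \<sigma> * Re (complex_of_real ((s n)\<^sup>2) * ip (y n) (y n)
      - cnj (of_real r) * ip (x n) (x n))) \<longlonglongrightarrow> sgn r * \<sigma> * Re 0"
    by (intro tendsto_intros rel)
  then have "(\<lambda>n. (s n)\<^sup>2 * (sgn r * \<sigma> * Re (ip (y n) (y n))) - \<bar>r\<bar> * (\<sigma> * Re (ip (x n) (x n))))
      \<longlonglongrightarrow> 0"
    by (simp add: algebra_simps abs_sgn)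
  from eventually_positive_transfer[OF c this e] have
    "\<forall>\<^sub>F n in sequentially. c\<^sup>2 * e / 2 / \<bar>r\<bar> < \<sigma> * Re (ip (x n) (x n))"
    by eventually_elim (use r in \<open>simp add: field_simps\<close>)
  moreover have "c\<^sup>2 * e / 2 / \<bar>r\<bar> > 0"
    using c e r by simp
  ultimately show "\<exists>e>0. \<forall>\<^sub>F n in sequentially. e < \<sigma> * Re (ip (x n) (x n))"
    by blast
qed

lemma typed_spectrum_transfer:
  assumes r: "r \<noteq> 0"
  shows "of_real r \<in> typed_spectrum ip (P O Q) weak \<sigma> \<longleftrightarrow>
    of_real r \<in> typed_spectrum ip (Q O P) weak (sgn r * \<sigma>)"
proof -
  interpret QP: adjoint_pair ip Q P
    by (rule swap)
  have sgn_twice: "sgn r * (sgn r * \<sigma>) = \<sigma>"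
    using r by (simp flip: mult.assoc)
  have definite_back: "sign_definite ip (P O Q) (of_real r) weak \<sigma> \<Longrightarrow>
      sign_definite ip (Q O P) (of_real r) weak (sgn r * \<sigma>)"
    using QP.sign_definite_transfer[OF r, of weak "sgn r * \<sigma>"] unfolding sgn_twice .
  have r': "complex_of_real r \<noteq> 0"
    using r by simp
  show ?thesis
    unfolding typed_spectrum_def
    using approx_point_spectrum_transfer[OF r'] QP.approx_point_spectrum_transfer[OF r']
      sign_definite_transfer[OF r, of weak \<sigma>] definite_back
      approx_point_spectrum_subset[of "P O Q"] approx_point_spectrum_subset[of "Q O P"]
    by blast
qed

lemma approx_point_spectrum_nonzero_eq:
  "approx_point_spectrum (P O Q) - {0} = approx_point_spectrum (Q O P) - {0}"
  using approx_point_spectrum_transfer adjoint_pair.approx_point_spectrum_transfer[OF swap]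
  by blast

lemma typed_spectrum_pos_reals:
  "typed_spectrum ip (P O Q) weak \<sigma> \<inter> pos_reals = typed_spectrum ip (Q O P) weak \<sigma> \<inter> pos_reals"
proof -
  have "of_real r \<in> typed_spectrum ip (P O Q) weak \<sigma> \<longleftrightarrow> of_real r \<in> typed_spectrum ip (Q O P) weak \<sigma>"
    if "r > 0" for r
    using typed_spectrum_transfer[of r weak \<sigma>] that by simp
  then show ?thesis
    unfolding pos_reals_def by blast
qed

lemma typed_spectrum_neg_reals:
  "typed_spectrum ip (P O Q) weak \<sigma> \<inter> neg_reals = typed_spectrum ip (Q O P) weak (- \<sigma>) \<inter> neg_reals"
proof -
  have "of_real r \<in> typed_spectrum ip (P O Q) weak \<sigma> \<longleftrightarrow> of_real r \<in> typed_spectrum ip (Q O P) weak (- \<sigma>)"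
    if "r < 0" for r
    using typed_spectrum_transfer[of r weak \<sigma>] that by simp
  then show ?thesis
    unfolding neg_reals_def by blast
qed

end

lemma krein_adjoint_pair:
  fixes ip :: "'a::{complex_normed_vector,banach} \<Rightarrow> 'a \<Rightarrow> complex"
  assumes krein: "krein_space ip" and T: "linear_operator T" "closed T"
    and dense: "closure (Domain T) = UNIV"
    and resolvents: "resolvent_set (T O krein_adjoint ip T) \<noteq> {}"
      "resolvent_set (krein_adjoint ip T O T) \<noteq> {}"
  shows "adjoint_pair ip T (krein_adjoint ip T)"
proof -
  have "bounded_sesquilinear_form ip"
    unfolding bounded_sesquilinear_form_def bounded_sesquilinear_form_axioms_def
    using krein_space_bounded_bilinear[OF krein] krein unfolding krein_space_def by blast
  moreover have "ip u y = ip x v" if "(x, u) \<in> T" "(y, v) \<in> krein_adjoint ip T" for x u y v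
    using that unfolding krein_adjoint_def by blast
  ultimately show ?thesis
    unfolding adjoint_pair_def adjoint_pair_axioms_def
    using T resolvents krein_adjoint_closed_operator[OF krein dense] by blast
qed

theorem proposition2p7:
  fixes ip :: "'a::{complex_normed_vector, banach} \<Rightarrow> 'a \<Rightarrow> complex"
    and T :: "('a \<times> 'a) set"
  assumes "krein_space ip"
    and "linear_operator T"
    and "closed T"
    and "closure (Domain T) = UNIV"
    and "resolvent_set (T O krein_adjoint ip T) \<noteq> {}"
    and "resolvent_set (krein_adjoint ip T O T) \<noteq> {}"
  shows "(approx_point_spectrum (T O krein_adjoint ip T) - {0}
           = approx_point_spectrum (krein_adjoint ip T O T) - {0}) \<and>
         (spec_pos_type ip (T O krein_adjoint ip T) \<inter> pos_reals
           = spec_pos_type ip (krein_adjoint ip T O T) \<inter> pos_reals) \<and>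
         (spec_neg_type ip (T O krein_adjoint ip T) \<inter> pos_reals
           = spec_neg_type ip (krein_adjoint ip T O T) \<inter> pos_reals) \<and>
         (spec_pos_type ip (T O krein_adjoint ip T) \<inter> neg_reals
           = spec_neg_type ip (krein_adjoint ip T O T) \<inter> neg_reals) \<and>
         (spec_neg_type ip (T O krein_adjoint ip T) \<inter> neg_reals
           = spec_pos_type ip (krein_adjoint ip T O T) \<inter> neg_reals) \<and>
         (spec_pi_plus ip (T O krein_adjoint ip T) \<inter> pos_reals
           = spec_pi_plus ip (krein_adjoint ip T O T) \<inter> pos_reals) \<and>
         (spec_pi_minus ip (T O krein_adjoint ip T) \<inter> pos_reals
           = spec_pi_minus ip (krein_adjoint ip T O T) \<inter> pos_reals) \<and>
         (spec_pi_plus ip (T O krein_adjoint ip T) \<inter> neg_reals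
           = spec_pi_minus ip (krein_adjoint ip T O T) \<inter> neg_reals) \<and>
         (spec_pi_minus ip (T O krein_adjoint ip T) \<inter> neg_reals
           = spec_pi_plus ip (krein_adjoint ip T O T) \<inter> neg_reals)"
proof -
  interpret adjoint_pair ip T "krein_adjoint ip T"
    by (rule krein_adjoint_pair[OF assms])
  show ?thesis
    unfolding spectra_of_type
    using approx_point_spectrum_nonzero_eq typed_spectrum_pos_reals typed_spectrum_neg_reals
    by simp
qed

end
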